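(* For $c>0$ (and any $s>0$, $F>1$), at every time $t$ with $Z^t>0$, conditional on $(x^t,\lambda^t)$, $$\mathbb E[Z^t-Z^{t+1}\mid \bar A]\ge -\frac{c}{1-e^{-c}}.$$ The same bound holds with $Z^t-Z^{t+1}$ replaced by $\min\{1,Z^t-Z^{t+1}\}$.
   Context: Consider the SA-$(1,\lambda)$-EA on a dynamic monotone function: a function $f:\{0,1\}^n\to\mathbb R$ is monotone if $f(x)>f(y)$ whenever $x\ne y$ and $x_i\ge y_i$ for all $i$; $(f^t)_{t\ge0}$ is a sequence of monotone functions, $f^t$ possibly chosen adversarially depending on $x^t$. The algorithm (with constants $c>0$, $s>0$, $F>1$) maintains $x^t\in\{0,1\}^n$, real $\lambda^t\ge1$; in generation $t$ it creates $\lfloor\lambda^t\rceil$ (nearest integer) offspring $y^{t,j}$, each independently by flipping every bit of $x^t$ independently with probability $c/n$; $x^{t+1}$ is an offspring maximizing $f^t$ (ties uniformly at random); $\lambda^{t+1}=\max\{1,\lambda^t/F\}$ if $f^t(x^{t+1})>f^t(x^t)$, else $\lambda^{t+1}=F^{1/s}\lambda^t$. $Z^t$ is the number of zero-bits of $x^t$. $A$ is the event that some offspring $y^{t,j}$ flips no one-bit of $x^t$; $\bar A$ is its complement (every offspring flips at least one one-bit of $x^t$). *)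

theory Defs
  imports "HOL-Probability.Probability"
begin

text \<open>Bit strings in {0,1}^n are represented as functions nat => bool that are
  False outside {..<n}; x i = True means bit i is a one-bit.\<close>

definition bitstrings :: "nat \<Rightarrow> (nat \<Rightarrow> bool) set" where
  "bitstrings n = {x. \<forall>i. n \<le> i \<longrightarrow> \<not> x i}"

definition monotone_bitfun :: "nat \<Rightarrow> ((nat \<Rightarrow> bool) \<Rightarrow> real) \<Rightarrow> bool" where
  "monotone_bitfun n f \<longleftrightarrow>
     (\<forall>x\<in>bitstrings n. \<forall>y\<in>bitstrings n. x \<noteq> y \<and> (\<forall>i. y i \<longrightarrow> x i) \<longrightarrow> f x > f y)"

definition zeros :: "nat \<Rightarrow> (nat \<Rightarrow> bool) \<Rightarrow> nat" where
  "zeros n x = card {i. i < n \<and> \<not> x i}"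

definition mutate :: "nat \<Rightarrow> real \<Rightarrow> (nat \<Rightarrow> bool) \<Rightarrow> (nat \<Rightarrow> bool) pmf" where
  "mutate n c x =
     map_pmf (\<lambda>flip i. x i \<noteq> flip i) (Pi_pmf {..<n} False (\<lambda>_. bernoulli_pmf (c / n)))"

definition num_offspring :: "real \<Rightarrow> nat" where
  "num_offspring lam = nat (round lam)"

definition generation ::
  "nat \<Rightarrow> real \<Rightarrow> ((nat \<Rightarrow> bool) \<Rightarrow> real) \<Rightarrow> (nat \<Rightarrow> bool) \<Rightarrow> real
     \<Rightarrow> ((nat \<Rightarrow> nat \<Rightarrow> bool) \<times> (nat \<Rightarrow> bool)) pmf" where
  "generation n c f x lam =
     (let k = num_offspring lam in
      do {
        ys \<leftarrow> Pi_pmf {..<k} (\<lambda>_. False) (\<lambda>_. mutate n c x);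
        j \<leftarrow> pmf_of_set {j. j < k \<and> (\<forall>j'<k. f (ys j') \<le> f (ys j))};
        return_pmf (ys, ys j)
      })"

definition event_notA :: "nat \<Rightarrow> (nat \<Rightarrow> bool) \<Rightarrow> real
     \<Rightarrow> ((nat \<Rightarrow> nat \<Rightarrow> bool) \<times> (nat \<Rightarrow> bool)) set" where
  "event_notA n x lam =
     {(ys, x'). \<forall>j < num_offspring lam. \<exists>i < n. x i \<and> \<not> ys j i}"

end

theory Submission
  imports Defs
begin

text \<open>Z can only grow through one-bits of x that the selected offspring flips, so it suffices to
  bound the conditional expectation of their number. Write q = c/n and m for the number of one-bits.
  Fix an offspring and condition on all the others: by monotonicity of f, its probability of
  being selected is antitone in the set A of one-bits it flips, while |A| is isotone. Grouping
  the subsets A by size and applying Chebyshev's sum inequality to the antitone level averages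
  shows that selection can only lower the expectation of |A| compared to a single offspring
  conditioned on A \<noteq> {}, which is m q / (1 - (1 - q)^m). By 1 - q \<le> exp (- q) and convexity of exp
  this is at most c / (1 - exp (- c)).\<close>

section \<open>Antitone functions of binomial random subsets\<close>

definition level_sum :: "('a set \<Rightarrow> real) \<Rightarrow> 'a set \<Rightarrow> nat \<Rightarrow> real" where
  "level_sum H U s = (\<Sum>A | A \<subseteq> U \<and> card A = s. H A)"

lemma sum_card_Suc_subsets_remove:
  fixes H :: "'a set \<Rightarrow> real"
  assumes fin: "finite U"
  shows "(\<Sum>A | A \<subseteq> U \<and> card A = Suc s. \<Sum>i\<in>A. H (A - {i}))
       = (\<Sum>B | B \<subseteq> U \<and> card B = s. \<Sum>i\<in>U - B. H B)"
proof -
  let ?SA = "{A. A \<subseteq> U \<and> card A = Suc s}" and ?SB = "{B. B \<subseteq> U \<and> card B = s}"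
  have fA: "finite ?SA" and fB: "finite ?SB"
    using fin by (auto intro: finite_subset[of _ "Pow U"])
  have bij: "bij_betw (\<lambda>(B, i). (insert i B, i)) (Sigma ?SB (\<lambda>B. U - B)) (Sigma ?SA (\<lambda>A. A))"
    by (rule bij_betwI[where g="\<lambda>(A, i). (A - {i}, i)"])
       (use fin in \<open>auto simp: finite_subset card_Diff_singleton insert_absorb\<close>)
  have "(\<Sum>A\<in>?SA. \<Sum>i\<in>A. H (A - {i})) = (\<Sum>(A, i)\<in>Sigma ?SA (\<lambda>A. A). H (A - {i}))"
    using fA fin by (subst sum.Sigma) (auto intro: finite_subset)
  also have "\<dots> = (\<Sum>(B, i)\<in>Sigma ?SB (\<lambda>B. U - B). H B)"
    by (subst sum.reindex_bij_betw[OF bij, symmetric]) (auto intro!: sum.cong)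
  also have "\<dots> = (\<Sum>B\<in>?SB. \<Sum>i\<in>U - B. H B)"
    using fB fin by (subst sum.Sigma) auto
  finally show ?thesis .
qed

lemma level_sum_Suc_le:
  assumes fin: "finite U"
    and anti: "\<And>A A'. A \<subseteq> A' \<Longrightarrow> A' \<subseteq> U \<Longrightarrow> H A' \<le> H A"
  shows "real (Suc s) * level_sum H U (Suc s) \<le> real (card U - s) * level_sum H U s"
proof -
  have "real (Suc s) * level_sum H U (Suc s) = (\<Sum>A | A \<subseteq> U \<and> card A = Suc s. \<Sum>i\<in>A. H A)"
    by (simp add: level_sum_def sum_distrib_left)
  also have "\<dots> \<le> (\<Sum>A | A \<subseteq> U \<and> card A = Suc s. \<Sum>i\<in>A. H (A - {i}))"
    by (intro sum_mono anti) auto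
  also have "\<dots> = (\<Sum>B | B \<subseteq> U \<and> card B = s. \<Sum>i\<in>U - B. H B)"
    by (rule sum_card_Suc_subsets_remove[OF fin])
  also have "\<dots> = real (card U - s) * level_sum H U s"
    using fin by (auto simp: level_sum_def sum_distrib_left card_Diff_subset finite_subset intro!: sum.cong)
  finally show ?thesis .
qed

lemma level_average_antitone:
  assumes fin: "finite U"
    and anti: "\<And>A A'. A \<subseteq> A' \<Longrightarrow> A' \<subseteq> U \<Longrightarrow> H A' \<le> H A"
    and "t \<le> s" "s \<le> card U"
  shows "level_sum H U s / real (card U choose s) \<le> level_sum H U t / real (card U choose t)"
proof -
  define m where "m = card U"
  define h where "h s = level_sum H U (min s m) / real (m choose min s m)" for s
  have "h (Suc s) \<le> h s" for s
  proof (cases "s < m")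
    case True
    have lv: "real (Suc s) * level_sum H U (Suc s) \<le> real (m - s) * level_sum H U s"
      unfolding m_def by (rule level_sum_Suc_le[OF fin anti])
    have "Suc s * (m choose Suc s) = (m - s) * (m choose s)"
      using True Suc_times_binomial_eq[of "m - 1" s] binomial_absorb_comp[of m s] by (cases m) auto
    then have bin: "real (m choose Suc s) * real (Suc s) = real (m choose s) * real (m - s)"
      by (metis mult.commute of_nat_mult)
    have "h (Suc s) = real (Suc s) * level_sum H U (Suc s) / (real (m choose Suc s) * real (Suc s))"
      using True by (simp add: h_def min_def)
    also have "\<dots> \<le> real (m - s) * level_sum H U s / (real (m choose s) * real (m - s))"
      unfolding bin using lv True by (intro divide_right_mono) auto
    also have "\<dots> = h s" using True by (simp add: h_def)
    finally show ?thesis .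
  qed (simp add: h_def min_def)
  then have "h s \<le> h t" using \<open>t \<le> s\<close> by (rule lift_Suc_antimono_le)
  then show ?thesis using assms(3,4) by (simp add: h_def m_def min_def)
qed

lemma sum_nonempty_subsets_by_card:
  fixes g :: "nat \<Rightarrow> real"
  assumes fin: "finite U"
  shows "(\<Sum>A | A \<subseteq> U \<and> A \<noteq> {}. g (card A) * H A) = (\<Sum>s=1..card U. g s * level_sum H U s)"
proof -
  have fP: "finite {A. A \<subseteq> U \<and> A \<noteq> {}}" using fin by (auto intro: finite_subset[of _ "Pow U"])
  have img: "card ` {A. A \<subseteq> U \<and> A \<noteq> {}} \<subseteq> {1..card U}"
    using fin by (auto simp: card_mono Suc_le_eq card_gt_0_iff finite_subset)
  have "(\<Sum>A | A \<subseteq> U \<and> A \<noteq> {}. g (card A) * H A)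
      = (\<Sum>s=1..card U. \<Sum>A | A \<in> {A. A \<subseteq> U \<and> A \<noteq> {}} \<and> card A = s. g (card A) * H A)"
    by (rule sum.group[OF fP _ img, symmetric]) simp
  also have "\<dots> = (\<Sum>s=1..card U. g s * level_sum H U s)"
    unfolding level_sum_def sum_distrib_left
    by (intro sum.cong refl) (auto intro!: sum.cong arg_cong[where f="sum _"])
  finally show ?thesis .
qed

lemma Chebyshev_sum_weighted_upper:
  fixes u a b :: "'a \<Rightarrow> real"
  assumes "\<And>i. i \<in> I \<Longrightarrow> 0 \<le> u i"
    and "\<And>i j. i \<in> I \<Longrightarrow> j \<in> I \<Longrightarrow> (a i - a j) * (b i - b j) \<le> 0"
  shows "(\<Sum>i\<in>I. u i * a i * b i) * (\<Sum>i\<in>I. u i) \<le> (\<Sum>i\<in>I. u i * a i) * (\<Sum>i\<in>I. u i * b i)"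
proof -
  let ?S = "\<Sum>i\<in>I. \<Sum>j\<in>I. u i * u j * ((a i - a j) * (b i - b j))"
  have "?S \<le> 0"
    using assms by (intro sum_nonpos mult_nonneg_nonpos[OF mult_nonneg_nonneg]) auto
  moreover have "?S = 2 * ((\<Sum>i\<in>I. u i * a i * b i) * (\<Sum>i\<in>I. u i)
                        - (\<Sum>i\<in>I. u i * a i) * (\<Sum>i\<in>I. u i * b i))"
  proof -
    have "?S = (\<Sum>i\<in>I. \<Sum>j\<in>I. (u i * a i * b i) * u j) + (\<Sum>i\<in>I. \<Sum>j\<in>I. u i * (u j * a j * b j))
             - (\<Sum>i\<in>I. \<Sum>j\<in>I. (u i * a i) * (u j * b j)) - (\<Sum>i\<in>I. \<Sum>j\<in>I. (u i * b i) * (u j * a j))"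
      by (simp add: algebra_simps sum_subtractf sum.distrib)
    moreover have "(\<Sum>i\<in>I. \<Sum>j\<in>I. (u i * a i * b i) * u j) = (\<Sum>i\<in>I. u i * a i * b i) * (\<Sum>i\<in>I. u i)"
      by (simp add: sum_distrib_left sum_distrib_right) (rule sum.swap)
    moreover have "(\<Sum>i\<in>I. \<Sum>j\<in>I. u i * (u j * a j * b j)) = (\<Sum>i\<in>I. u i * a i * b i) * (\<Sum>i\<in>I. u i)"
      by (simp add: sum_distrib_left sum_distrib_right mult.commute) (rule sum.swap)
    moreover have "(\<Sum>i\<in>I. \<Sum>j\<in>I. (u i * a i) * (u j * b j)) = (\<Sum>i\<in>I. u i * a i) * (\<Sum>i\<in>I. u i * b i)"
      by (simp add: sum_distrib_left sum_distrib_right) (rule sum.swap)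
    moreover have "(\<Sum>i\<in>I. \<Sum>j\<in>I. (u i * b i) * (u j * a j)) = (\<Sum>i\<in>I. u i * a i) * (\<Sum>i\<in>I. u i * b i)"
      by (simp add: sum_distrib_left sum_distrib_right mult.commute)
    ultimately show ?thesis by simp
  qed
  ultimately show ?thesis by simp
qed

lemma sum_binomial_weights_from_1:
  fixes q :: real
  shows "(\<Sum>s=1..m. real (m choose s) * q ^ s * (1 - q) ^ (m - s)) = 1 - (1 - q) ^ m"
proof -
  have "1 = (q + (1 - q)) ^ m" by simp
  also have "\<dots> = (\<Sum>s\<le>m. real (m choose s) * q ^ s * (1 - q) ^ (m - s))"
    by (rule binomial_ring)
  also have "\<dots> = (1 - q) ^ m + (\<Sum>s=1..m. real (m choose s) * q ^ s * (1 - q) ^ (m - s))"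
    by (simp add: atMost_atLeast0 sum.atLeast_Suc_atMost)
  finally show ?thesis by simp
qed

lemma sum_binomial_weights_times_index:
  fixes q :: real
  shows "(\<Sum>s=1..m. real (m choose s) * q ^ s * (1 - q) ^ (m - s) * real s) = real m * q"
proof (cases m)
  case (Suc k)
  have "(\<Sum>s=1..Suc k. real (Suc k choose s) * q ^ s * (1 - q) ^ (Suc k - s) * real s)
      = (\<Sum>t=0..k. real (Suc k choose Suc t) * q ^ Suc t * (1 - q) ^ (Suc k - Suc t) * real (Suc t))"
    by (subst sum.shift_bounds_cl_Suc_ivl[symmetric]) simp
  also have "\<dots> = (\<Sum>t=0..k. real ((Suc k choose Suc t) * Suc t) * q * (q ^ t * (1 - q) ^ (k - t)))"
    by (intro sum.cong refl) (simp only: of_nat_mult power_Suc diff_Suc_Suc mult_ac)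
  also have "\<dots> = (\<Sum>t=0..k. real (Suc k) * q * (real (k choose t) * q ^ t * (1 - q) ^ (k - t)))"
    by (intro sum.cong refl) (unfold Suc_times_binomial_eq[symmetric], simp only: of_nat_mult mult_ac)
  also have "\<dots> = real (Suc k) * q * (q + (1 - q)) ^ k"
    unfolding binomial_ring atMost_atLeast0 by (simp add: sum_distrib_left)
  finally show ?thesis using Suc by simp
qed simp

text \<open>In probabilistic terms: if A is a binomial random subset of U, the size of A and an antitone
  function of A are negatively correlated conditionally on A \<noteq> {}.\<close>
lemma antitone_binomial_subset_sum_card_le:
  fixes H :: "'a set \<Rightarrow> real" and q :: real
  assumes fin: "finite U"
    and anti: "\<And>A A'. A \<subseteq> A' \<Longrightarrow> A' \<subseteq> U \<Longrightarrow> H A' \<le> H A"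
    and q: "0 \<le> q" "q \<le> 1"
  shows "(\<Sum>A | A \<subseteq> U \<and> A \<noteq> {}. q ^ card A * (1 - q) ^ (card U - card A) * real (card A) * H A)
           * (1 - (1 - q) ^ card U)
         \<le> (\<Sum>A | A \<subseteq> U \<and> A \<noteq> {}. q ^ card A * (1 - q) ^ (card U - card A) * H A)
           * (real (card U) * q)"
proof -
  define m where "m = card U"
  define u where "u s = real (m choose s) * q ^ s * (1 - q) ^ (m - s)" for s
  define h where "h s = level_sum H U s / real (m choose s)" for s
  have "(\<Sum>s\<in>{1..m}. u s * real s * h s) * (\<Sum>s\<in>{1..m}. u s)
        \<le> (\<Sum>s\<in>{1..m}. u s * real s) * (\<Sum>s\<in>{1..m}. u s * h s)"
  proof (rule Chebyshev_sum_weighted_upper)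
    show "0 \<le> u s" for s using q by (simp add: u_def)
    fix i j assume "i \<in> {1..m}" "j \<in> {1..m}"
    then have "(i \<le> j \<longrightarrow> h j \<le> h i) \<and> (j \<le> i \<longrightarrow> h i \<le> h j)"
      unfolding h_def m_def using level_average_antitone[OF fin anti] by auto
    then show "(real i - real j) * (h i - h j) \<le> 0"
      by (cases "i \<le> j") (auto simp: mult_nonpos_nonneg mult_nonneg_nonpos)
  qed
  moreover have "(\<Sum>s=1..m. u s) = 1 - (1 - q) ^ m"
    using sum_binomial_weights_from_1 by (simp add: u_def)
  moreover have "(\<Sum>s=1..m. u s * real s) = real m * q"
    using sum_binomial_weights_times_index by (simp add: u_def)
  moreover have "(\<Sum>A | A \<subseteq> U \<and> A \<noteq> {}. q ^ card A * (1 - q) ^ (m - card A) * real (card A) * H A)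
        = (\<Sum>s=1..m. u s * real s * h s)"
    unfolding m_def sum_nonempty_subsets_by_card[OF fin, where g="\<lambda>s. q ^ s * (1 - q) ^ (card U - s) * real s"]
    by (intro sum.cong refl) (simp add: u_def h_def m_def)
  moreover have "(\<Sum>A | A \<subseteq> U \<and> A \<noteq> {}. q ^ card A * (1 - q) ^ (m - card A) * H A)
        = (\<Sum>s=1..m. u s * h s)"
    unfolding m_def sum_nonempty_subsets_by_card[OF fin, where g="\<lambda>s. q ^ s * (1 - q) ^ (card U - s)"]
    by (intro sum.cong refl) (simp add: u_def h_def m_def)
  ultimately show ?thesis by (simp add: m_def mult.commute)
qed

section \<open>Expectations over finitely supported distributions\<close>

lemma expectation_bind_pmf_finite:
  fixes F :: "'b \<Rightarrow> real"
  assumes fp: "finite (set_pmf p)" and fq: "\<And>a. a \<in> set_pmf p \<Longrightarrow> finite (set_pmf (q a))"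
  shows "measure_pmf.expectation (bind_pmf p q) F = measure_pmf.expectation p (\<lambda>a. measure_pmf.expectation (q a) F)"
proof -
  define S where "S = (\<Union>a\<in>set_pmf p. set_pmf (q a))"
  have fS: "finite S" using fp fq by (auto simp: S_def)
  have "measure_pmf.expectation (bind_pmf p q) F = (\<Sum>z\<in>S. F z * pmf (bind_pmf p q) z)"
    by (rule integral_measure_pmf_real[OF fS]) (auto simp: S_def)
  also have "\<dots> = (\<Sum>z\<in>S. F z * (\<Sum>a\<in>set_pmf p. pmf (q a) z * pmf p a))"
    unfolding pmf_bind by (intro sum.cong refl arg_cong2[where f="(*)"] integral_measure_pmf_real[OF fp]) auto
  also have "\<dots> = (\<Sum>a\<in>set_pmf p. (\<Sum>z\<in>S. F z * pmf (q a) z) * pmf p a)"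
    by (simp add: sum_distrib_left sum_distrib_right mult_ac sum.swap[of _ S])
  also have "\<dots> = (\<Sum>a\<in>set_pmf p. measure_pmf.expectation (q a) F * pmf p a)"
    by (intro sum.cong refl arg_cong2[where f="(*)"] integral_measure_pmf_real[OF fS, symmetric])
       (auto simp: S_def)
  also have "\<dots> = measure_pmf.expectation p (\<lambda>a. measure_pmf.expectation (q a) F)"
    by (rule integral_measure_pmf_real[OF fp, symmetric]) auto
  finally show ?thesis .
qed

lemma expectation_commute_finite:
  fixes F :: "'a \<Rightarrow> 'b \<Rightarrow> real"
  assumes fp: "finite (set_pmf p)" and fq: "finite (set_pmf q)"
  shows "measure_pmf.expectation p (\<lambda>a. measure_pmf.expectation q (F a))
       = measure_pmf.expectation q (\<lambda>b. measure_pmf.expectation p (\<lambda>a. F a b))"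
proof -
  have "measure_pmf.expectation p (\<lambda>a. measure_pmf.expectation q (F a))
      = (\<Sum>a\<in>set_pmf p. (\<Sum>b\<in>set_pmf q. F a b * pmf q b) * pmf p a)"
    by (subst integral_measure_pmf_real[OF fp], simp, intro sum.cong refl arg_cong2[where f="(*)"])
       (rule integral_measure_pmf_real[OF fq], simp)
  also have "\<dots> = (\<Sum>b\<in>set_pmf q. (\<Sum>a\<in>set_pmf p. F a b * pmf p a) * pmf q b)"
    by (simp add: sum_distrib_left sum_distrib_right mult_ac sum.swap[of _ "set_pmf q"])
  also have "\<dots> = measure_pmf.expectation q (\<lambda>b. measure_pmf.expectation p (\<lambda>a. F a b))"
    by (subst integral_measure_pmf_real[OF fq], simp, intro sum.cong refl arg_cong2[where f="(*)"])
       (rule integral_measure_pmf_real[OF fp, symmetric], simp)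
  finally show ?thesis .
qed

lemma expectation_cond_pmf_finite:
  fixes h :: "'a \<Rightarrow> real"
  assumes fp: "finite (set_pmf p)" and ne: "set_pmf p \<inter> A \<noteq> {}"
  shows "measure_pmf.expectation (cond_pmf p A) h
       = measure_pmf.expectation p (\<lambda>z. indicator A z * h z) / measure_pmf.prob p A"
proof -
  have "measure_pmf.expectation (cond_pmf p A) h = (\<Sum>z\<in>set_pmf p. h z * pmf (cond_pmf p A) z)"
    by (rule integral_measure_pmf_real[OF fp]) (use ne in auto)
  also have "\<dots> = (\<Sum>z\<in>set_pmf p. indicator A z * h z * pmf p z) / measure_pmf.prob p A"
    unfolding sum_divide_distrib by (intro sum.cong refl) (simp add: pmf_cond[OF ne] indicator_def)
  also have "(\<Sum>z\<in>set_pmf p. indicator A z * h z * pmf p z) = measure_pmf.expectation p (\<lambda>z. indicator A z * h z)"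
    by (rule integral_measure_pmf_real[OF fp, symmetric]) auto
  finally show ?thesis .
qed

section \<open>Standard bit mutation\<close>

definition one_bits :: "nat \<Rightarrow> (nat \<Rightarrow> bool) \<Rightarrow> nat set" where
  "one_bits n x = {i. i < n \<and> x i}"

definition lost_ones :: "nat \<Rightarrow> (nat \<Rightarrow> bool) \<Rightarrow> (nat \<Rightarrow> bool) \<Rightarrow> nat set" where
  "lost_ones n x y = {i. i < n \<and> x i \<and> \<not> y i}"

definition flip_bits :: "(nat \<Rightarrow> bool) \<Rightarrow> nat set \<Rightarrow> nat set \<Rightarrow> nat \<Rightarrow> bool" where
  "flip_bits x A B = (\<lambda>i. (x i \<and> i \<notin> A) \<or> i \<in> B)"

abbreviation zero_bits :: "nat \<Rightarrow> (nat \<Rightarrow> bool) \<Rightarrow> nat set" where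
  "zero_bits n x \<equiv> {i. i < n \<and> \<not> x i}"

lemma finite_bitstrings: "finite (bitstrings n)"
proof -
  have "bitstrings n \<subseteq> (\<lambda>Y i. i \<in> Y) ` Pow {..<n}"
  proof
    fix y assume "y \<in> bitstrings n"
    then have "y = (\<lambda>i. i \<in> {i. y i})" "{i. y i} \<in> Pow {..<n}"
      by (auto simp: bitstrings_def not_le[symmetric])
    then show "y \<in> (\<lambda>Y i. i \<in> Y) ` Pow {..<n}" by blast
  qed
  then show ?thesis by (rule finite_subset) simp
qed

lemma set_pmf_mutate_subset:
  "x \<in> bitstrings n \<Longrightarrow> set_pmf (mutate n c x) \<subseteq> bitstrings n"
  using set_Pi_pmf_subset[of "{..<n}" False "\<lambda>_. bernoulli_pmf (c / n)"]
  by (auto simp: mutate_def bitstrings_def)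

lemma finite_set_pmf_mutate:
  "x \<in> bitstrings n \<Longrightarrow> finite (set_pmf (mutate n c x))"
  using set_pmf_mutate_subset finite_bitstrings by (rule finite_subset)

lemma pmf_mutate:
  assumes x: "x \<in> bitstrings n" and y: "y \<in> bitstrings n"
    and q: "0 \<le> c / n" "c / n \<le> 1"
  shows "pmf (mutate n c x) y = (\<Prod>i<n. if x i \<noteq> y i then c / n else 1 - c / n)"
proof -
  define \<tau> where "\<tau> = (\<lambda>(fl::nat\<Rightarrow>bool) i. x i \<noteq> fl i)"
  have "\<tau> (\<tau> y) = y" by (auto simp: \<tau>_def)
  then have "pmf (mutate n c x) y = pmf (map_pmf \<tau> (Pi_pmf {..<n} False (\<lambda>_. bernoulli_pmf (c / n)))) (\<tau> (\<tau> y))"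
    by (simp add: mutate_def \<tau>_def)
  also have "\<dots> = pmf (Pi_pmf {..<n} False (\<lambda>_. bernoulli_pmf (c / n))) (\<tau> y)"
    by (rule pmf_map_inj') (auto simp: \<tau>_def inj_def fun_eq_iff)
  also have "\<dots> = (\<Prod>i<n. pmf (bernoulli_pmf (c / n)) (\<tau> y i))"
    using x y by (subst pmf_Pi) (auto simp: \<tau>_def bitstrings_def)
  also have "\<dots> = (\<Prod>i<n. if x i \<noteq> y i then c / n else 1 - c / n)"
    using q by (intro prod.cong refl) (auto simp: \<tau>_def)
  finally show ?thesis .
qed

lemma prod_if_in_subset:
  fixes a b :: real
  assumes "finite S" "C \<subseteq> S"
  shows "(\<Prod>i\<in>S. if i \<in> C then a else b) = a ^ card C * b ^ (card S - card C)"
proof -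
  have "(\<Prod>i\<in>S. if i \<in> C then a else b) = prod (\<lambda>_. a) (S \<inter> {i. i \<in> C}) * prod (\<lambda>_. b) (S \<inter> - {i. i \<in> C})"
    by (rule prod.If_cases[OF assms(1)])
  also have "S \<inter> {i. i \<in> C} = C" using assms by auto
  also have "S \<inter> - {i. i \<in> C} = S - C" by auto
  finally show ?thesis using assms by (simp add: card_Diff_subset finite_subset)
qed

lemma flip_bits_in_bitstrings:
  "x \<in> bitstrings n \<Longrightarrow> B \<subseteq> zero_bits n x \<Longrightarrow> flip_bits x A B \<in> bitstrings n"
  by (auto simp: flip_bits_def bitstrings_def)

lemma lost_ones_flip_bits:
  "A \<subseteq> one_bits n x \<Longrightarrow> B \<subseteq> zero_bits n x \<Longrightarrow> lost_ones n x (flip_bits x A B) = A"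
  by (auto simp: lost_ones_def flip_bits_def one_bits_def)

lemma bij_betw_flip_bits:
  assumes x: "x \<in> bitstrings n"
  shows "bij_betw (\<lambda>(A, B). flip_bits x A B) (Pow (one_bits n x) \<times> Pow (zero_bits n x)) (bitstrings n)"
proof (rule bij_betwI[where g="\<lambda>y. (lost_ones n x y, {i \<in> zero_bits n x. y i})"])
  show "(\<lambda>y. (lost_ones n x y, {i \<in> zero_bits n x. y i})) \<in> bitstrings n \<rightarrow> Pow (one_bits n x) \<times> Pow (zero_bits n x)"
    by (auto simp: lost_ones_def one_bits_def)
  show "(\<lambda>(A, B). flip_bits x A B) (lost_ones n x y, {i \<in> zero_bits n x. y i}) = y" if "y \<in> bitstrings n" for y
    using that x by (auto simp: flip_bits_def lost_ones_def bitstrings_def fun_eq_iff not_le[symmetric])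
qed (use x in \<open>auto simp: flip_bits_def one_bits_def lost_ones_def bitstrings_def\<close>)

lemma pmf_mutate_flip_bits:
  assumes x: "x \<in> bitstrings n" and q: "0 \<le> c / n" "c / n \<le> 1"
    and A: "A \<subseteq> one_bits n x" and B: "B \<subseteq> zero_bits n x"
  defines "q \<equiv> c / n"
  shows "pmf (mutate n c x) (flip_bits x A B)
       = (q ^ card A * (1 - q) ^ (card (one_bits n x) - card A))
         * (q ^ card B * (1 - q) ^ (card (zero_bits n x) - card B))"
proof -
  have un: "{..<n} = one_bits n x \<union> zero_bits n x" and dj: "one_bits n x \<inter> zero_bits n x = {}"
    by (auto simp: one_bits_def)
  have fin: "finite (one_bits n x)" "finite (zero_bits n x)" by (auto simp: one_bits_def)
  have "pmf (mutate n c x) (flip_bits x A B) = (\<Prod>i<n. if x i \<noteq> flip_bits x A B i then q else 1 - q)"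
    unfolding q_def by (rule pmf_mutate[OF x flip_bits_in_bitstrings[OF x B] q])
  also have "\<dots> = (\<Prod>i\<in>one_bits n x. if i \<in> A then q else 1 - q) * (\<Prod>i\<in>zero_bits n x. if i \<in> B then q else 1 - q)"
    unfolding un using fin dj A B
    by (subst prod.union_disjoint) (auto simp: flip_bits_def one_bits_def intro!: arg_cong2[where f="(*)"] prod.cong)
  finally show ?thesis
    by (simp only: prod_if_in_subset[OF fin(1) A] prod_if_in_subset[OF fin(2) B])
qed

lemma expectation_mutate:
  fixes h :: "(nat \<Rightarrow> bool) \<Rightarrow> real"
  assumes x: "x \<in> bitstrings n" and q: "0 \<le> c / n" "c / n \<le> 1"
  defines "q \<equiv> c / n"
  shows "measure_pmf.expectation (mutate n c x) h =
    (\<Sum>A\<in>Pow (one_bits n x). \<Sum>B\<in>Pow (zero_bits n x).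
        (q ^ card A * (1 - q) ^ (card (one_bits n x) - card A))
        * (q ^ card B * (1 - q) ^ (card (zero_bits n x) - card B)) * h (flip_bits x A B))"
proof -
  have "measure_pmf.expectation (mutate n c x) h = (\<Sum>y\<in>bitstrings n. h y * pmf (mutate n c x) y)"
    using set_pmf_mutate_subset[OF x] by (intro integral_measure_pmf_real[OF finite_bitstrings]) auto
  also have "\<dots> = (\<Sum>(A, B)\<in>Pow (one_bits n x) \<times> Pow (zero_bits n x).
                     h (flip_bits x A B) * pmf (mutate n c x) (flip_bits x A B))"
    by (rule sum.reindex_bij_betw[OF bij_betw_flip_bits[OF x], symmetric, THEN trans]) (simp add: case_prod_beta)
  also have "\<dots> = (\<Sum>A\<in>Pow (one_bits n x). \<Sum>B\<in>Pow (zero_bits n x).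
        (q ^ card A * (1 - q) ^ (card (one_bits n x) - card A))
        * (q ^ card B * (1 - q) ^ (card (zero_bits n x) - card B)) * h (flip_bits x A B))"
    unfolding sum.cartesian_product[symmetric] q_def
    by (intro sum.cong refl) (simp add: pmf_mutate_flip_bits[OF x q] mult_ac)
  finally show ?thesis .
qed

lemma expectation_mutate_lost_ones:
  fixes g :: "(nat \<Rightarrow> bool) \<Rightarrow> real" and \<phi> :: "nat \<Rightarrow> real"
  assumes x: "x \<in> bitstrings n" and q: "0 \<le> c / n" "c / n \<le> 1"
  defines "q \<equiv> c / n"
  shows "measure_pmf.expectation (mutate n c x)
           (\<lambda>y. if lost_ones n x y \<noteq> {} then \<phi> (card (lost_ones n x y)) * g y else 0)
       = (\<Sum>B\<in>Pow (zero_bits n x). q ^ card B * (1 - q) ^ (card (zero_bits n x) - card B) *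
            (\<Sum>A | A \<subseteq> one_bits n x \<and> A \<noteq> {}.
               q ^ card A * (1 - q) ^ (card (one_bits n x) - card A) * \<phi> (card A) * g (flip_bits x A B)))"
proof -
  have fin: "finite (one_bits n x)" by (simp add: one_bits_def)
  have nonempty: "(\<Sum>A\<in>Pow (one_bits n x). if A \<noteq> {} then F A else 0) = (\<Sum>A | A \<subseteq> one_bits n x \<and> A \<noteq> {}. F A)"
    for F :: "nat set \<Rightarrow> real"
    using sum.inter_filter[of "Pow (one_bits n x)" F "\<lambda>A. A \<noteq> {}"] fin by simp
  have "measure_pmf.expectation (mutate n c x)
           (\<lambda>y. if lost_ones n x y \<noteq> {} then \<phi> (card (lost_ones n x y)) * g y else 0)
      = (\<Sum>A\<in>Pow (one_bits n x). \<Sum>B\<in>Pow (zero_bits n x).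
           q ^ card B * (1 - q) ^ (card (zero_bits n x) - card B) *
           (if A \<noteq> {} then q ^ card A * (1 - q) ^ (card (one_bits n x) - card A) * \<phi> (card A) * g (flip_bits x A B) else 0))"
    unfolding expectation_mutate[OF x q] q_def
    by (intro sum.cong refl) (simp add: lost_ones_flip_bits)
  also have "\<dots> = (\<Sum>B\<in>Pow (zero_bits n x). \<Sum>A\<in>Pow (one_bits n x).
           q ^ card B * (1 - q) ^ (card (zero_bits n x) - card B) *
           (if A \<noteq> {} then q ^ card A * (1 - q) ^ (card (one_bits n x) - card A) * \<phi> (card A) * g (flip_bits x A B) else 0))"
    by (rule sum.swap)
  finally show ?thesis
    by (simp only: sum_distrib_left[symmetric] nonempty)
qed

lemma expectation_mutate_lost_ones_le:
  fixes g :: "(nat \<Rightarrow> bool) \<Rightarrow> real"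
  assumes x: "x \<in> bitstrings n" and q: "0 \<le> c / n" "c / n \<le> 1"
    and mono: "\<And>y y'. y \<in> bitstrings n \<Longrightarrow> y' \<in> bitstrings n \<Longrightarrow> (\<forall>i. y' i \<longrightarrow> y i) \<Longrightarrow> g y' \<le> g y"
  defines "m \<equiv> card (one_bits n x)"
  shows "measure_pmf.expectation (mutate n c x)
           (\<lambda>y. if lost_ones n x y \<noteq> {} then real (card (lost_ones n x y)) * g y else 0)
         * (1 - (1 - c / n) ^ m)
       \<le> measure_pmf.expectation (mutate n c x) (\<lambda>y. if lost_ones n x y \<noteq> {} then g y else 0)
         * (real m * (c / n))"
proof -
  define q where "q = c / n"
  define w where "w B = q ^ card B * (1 - q) ^ (card (zero_bits n x) - card B)" for B :: "nat set"
  define S where "S \<phi> B = (\<Sum>A | A \<subseteq> one_bits n x \<and> A \<noteq> {}.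
                   q ^ card A * (1 - q) ^ (m - card A) * \<phi> (card A) * g (flip_bits x A B))"
    for \<phi> :: "nat \<Rightarrow> real" and B
  have fin: "finite (one_bits n x)" by (simp add: one_bits_def)
  have "S real B * (1 - (1 - q) ^ m) \<le> S (\<lambda>_. 1) B * (real m * q)" if B: "B \<subseteq> zero_bits n x" for B
  proof -
    have "g (flip_bits x A' B) \<le> g (flip_bits x A B)" if "A \<subseteq> A'" for A A'
      using that B x by (intro mono flip_bits_in_bitstrings) (auto simp: flip_bits_def)
    then show ?thesis
      unfolding S_def m_def
      using antitone_binomial_subset_sum_card_le[OF fin _ q[folded q_def], of "\<lambda>A. g (flip_bits x A B)"]
      by simp
  qed
  then have "(\<Sum>B\<in>Pow (zero_bits n x). w B * S real B) * (1 - (1 - q) ^ m)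
           \<le> (\<Sum>B\<in>Pow (zero_bits n x). w B * S (\<lambda>_. 1) B) * (real m * q)"
    unfolding sum_distrib_right mult.assoc using q
    by (intro sum_mono mult_left_mono) (auto simp: w_def q_def)
  moreover have "measure_pmf.expectation (mutate n c x)
      (\<lambda>y. if lost_ones n x y \<noteq> {} then real (card (lost_ones n x y)) * g y else 0)
      = (\<Sum>B\<in>Pow (zero_bits n x). w B * S real B)"
    unfolding S_def w_def q_def m_def by (rule expectation_mutate_lost_ones[OF x q])
  moreover have "measure_pmf.expectation (mutate n c x) (\<lambda>y. if lost_ones n x y \<noteq> {} then g y else 0)
      = (\<Sum>B\<in>Pow (zero_bits n x). w B * S (\<lambda>_. 1) B)"
    using expectation_mutate_lost_ones[OF x q, of "\<lambda>_. 1" g, unfolded mult_1_left mult_1_right]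
    unfolding S_def w_def q_def m_def by simp
  ultimately show ?thesis by (simp add: q_def)
qed

lemma finite_set_Pi_pmf_mutate:
  assumes "x \<in> bitstrings n" "finite R"
  shows "finite (set_pmf (Pi_pmf R d (\<lambda>_. mutate n c x)))"
  by (rule finite_subset[OF set_Pi_pmf_subset'[OF assms(2)]])
     (use finite_set_pmf_mutate[OF assms(1)] assms(2) in \<open>auto intro: finite_PiE_dflt\<close>)

lemma expectation_Pi_pmf_mutate_split:
  fixes \<Phi> :: "(nat \<Rightarrow> nat \<Rightarrow> bool) \<Rightarrow> real"
  assumes x: "x \<in> bitstrings n" and j: "j < K"
  shows "measure_pmf.expectation (Pi_pmf {..<K} (\<lambda>_. False) (\<lambda>_. mutate n c x)) \<Phi>
    = measure_pmf.expectation (Pi_pmf ({..<K} - {j}) (\<lambda>_. False) (\<lambda>_. mutate n c x))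
        (\<lambda>zs. measure_pmf.expectation (mutate n c x) (\<lambda>y. \<Phi> (zs(j := y))))"
proof -
  define M where "M = mutate n c x"
  define Q where "Q = Pi_pmf ({..<K} - {j}) (\<lambda>_. False) (\<lambda>_. M)"
  have fM: "finite (set_pmf M)" unfolding M_def by (rule finite_set_pmf_mutate[OF x])
  have fQ: "finite (set_pmf Q)" unfolding Q_def M_def by (rule finite_set_Pi_pmf_mutate[OF x]) simp
  have "{..<K} = insert j ({..<K} - {j})" using j by auto
  then have "Pi_pmf {..<K} (\<lambda>_. False) (\<lambda>_. M) = do {y \<leftarrow> M; zs \<leftarrow> Q; return_pmf (zs(j := y))}"
    unfolding Q_def by (subst Pi_pmf_insert'[symmetric]) auto
  then have "measure_pmf.expectation (Pi_pmf {..<K} (\<lambda>_. False) (\<lambda>_. M)) \<Phi>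
     = measure_pmf.expectation M (\<lambda>y. measure_pmf.expectation Q (\<lambda>zs. \<Phi> (zs(j := y))))"
    using fM fQ by (simp add: expectation_bind_pmf_finite)
  also have "\<dots> = measure_pmf.expectation Q (\<lambda>zs. measure_pmf.expectation M (\<lambda>y. \<Phi> (zs(j := y))))"
    by (rule expectation_commute_finite[OF fM fQ])
  finally show ?thesis unfolding M_def Q_def .
qed

section \<open>Selection of a best offspring\<close>

definition winners :: "((nat \<Rightarrow> bool) \<Rightarrow> real) \<Rightarrow> nat \<Rightarrow> (nat \<Rightarrow> nat \<Rightarrow> bool) \<Rightarrow> nat set" where
  "winners f K ys = {j. j < K \<and> (\<forall>j'<K. f (ys j') \<le> f (ys j))}"

definition selection_prob :: "((nat \<Rightarrow> bool) \<Rightarrow> real) \<Rightarrow> nat \<Rightarrow> nat \<Rightarrow> (nat \<Rightarrow> nat \<Rightarrow> bool) \<Rightarrow> real" where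
  "selection_prob f K j ys = (if j \<in> winners f K ys then 1 / real (card (winners f K ys)) else 0)"

lemma winners_subset: "winners f K ys \<subseteq> {..<K}"
  by (auto simp: winners_def)

lemma finite_winners: "finite (winners f K ys)"
  using winners_subset by (rule finite_subset) simp

lemma winners_nonempty:
  assumes "0 < K"
  shows "winners f K ys \<noteq> {}"
proof -
  have "Max ((\<lambda>j. f (ys j)) ` {..<K}) \<in> (\<lambda>j. f (ys j)) ` {..<K}"
    using assms by (intro Max_in) auto
  then obtain j where "j < K" "f (ys j) = Max ((\<lambda>j. f (ys j)) ` {..<K})" by auto
  then have "j \<in> winners f K ys" by (auto simp: winners_def)
  then show ?thesis by auto
qed

lemma sum_winners_divide_card:
  "(\<Sum>j\<in>winners f K ys. L j) / real (card (winners f K ys)) = (\<Sum>j<K. selection_prob f K j ys * L j)"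
proof -
  have "(\<Sum>j<K. selection_prob f K j ys * L j)
      = (\<Sum>j<K. if j \<in> winners f K ys then L j / real (card (winners f K ys)) else 0)"
    by (intro sum.cong refl) (simp add: selection_prob_def)
  also have "\<dots> = (\<Sum>j\<in>{..<K} \<inter> winners f K ys. L j / real (card (winners f K ys)))"
    by (simp add: sum.If_cases)
  also have "{..<K} \<inter> winners f K ys = winners f K ys" using winners_subset by blast
  finally show ?thesis by (simp add: sum_divide_distrib)
qed

text \<open>Replacing offspring j by a strictly better one makes j the unique winner.\<close>
lemma selection_prob_mono:
  assumes mono: "monotone_bitfun n f"
    and y: "y \<in> bitstrings n" and y': "y' \<in> bitstrings n" and le: "\<forall>i. y' i \<longrightarrow> y i"
  shows "selection_prob f K j (zs(j := y')) \<le> selection_prob f K j (zs(j := y))"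
proof (cases "y' \<noteq> y \<and> j \<in> winners f K (zs(j := y'))")
  case True
  then have "y \<noteq> y'" by auto
  then have lt: "f y' < f y"
    using mono y y' le unfolding monotone_bitfun_def by blast
  have j: "j < K" and others: "\<And>j'. j' < K \<Longrightarrow> j' \<noteq> j \<Longrightarrow> f (zs j') \<le> f y'"
    using True unfolding winners_def by auto
  have "winners f K (zs(j := y)) = {j}"
  proof (rule set_eqI iffI)+
    fix j' assume "j' \<in> winners f K (zs(j := y))"
    then have "j' < K" "f y \<le> f ((zs(j := y)) j')"
      unfolding winners_def using j by auto
    then show "j' \<in> {j}" using others[of j'] lt by (cases "j' = j") auto
  next
    fix j' assume "j' \<in> {j}"
    then show "j' \<in> winners f K (zs(j := y))"
      unfolding winners_def using j others lt by fastforce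
  qed
  moreover have "1 \<le> card (winners f K (zs(j := y')))"
    using True finite_winners by (metis One_nat_def Suc_leI card_gt_0_iff empty_iff)
  ultimately show ?thesis by (simp add: selection_prob_def)
qed (auto simp: selection_prob_def)

definition all_lose_ones :: "nat \<Rightarrow> (nat \<Rightarrow> bool) \<Rightarrow> nat \<Rightarrow> (nat \<Rightarrow> nat \<Rightarrow> bool) \<Rightarrow> bool" where
  "all_lose_ones n x K ys \<longleftrightarrow> (\<forall>j<K. lost_ones n x (ys j) \<noteq> {})"

text \<open>With the other offspring fixed, the selection probability of offspring j is a monotone
  function of it, so the single-offspring estimate applies.\<close>
lemma expectation_mutate_selected_lost_ones_le:
  assumes x: "x \<in> bitstrings n" and q: "0 \<le> c / n" "c / n \<le> 1"
    and mono: "monotone_bitfun n f" and j: "j < K"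
  defines "m \<equiv> card (one_bits n x)"
  shows "measure_pmf.expectation (mutate n c x) (\<lambda>y. if all_lose_ones n x K (zs(j := y))
            then selection_prob f K j (zs(j := y)) * real (card (lost_ones n x ((zs(j := y)) j))) else 0)
          * (1 - (1 - c / n) ^ m)
        \<le> measure_pmf.expectation (mutate n c x) (\<lambda>y. if all_lose_ones n x K (zs(j := y))
            then selection_prob f K j (zs(j := y)) else 0)
          * (real m * (c / n))"
proof -
  define g where "g y = (if \<forall>j'<K. j' \<noteq> j \<longrightarrow> lost_ones n x (zs j') \<noteq> {}
                         then selection_prob f K j (zs(j := y)) else 0)" for y
  have all_upd: "all_lose_ones n x K (zs(j := y)) \<longleftrightarrow>
      lost_ones n x y \<noteq> {} \<and> (\<forall>j'<K. j' \<noteq> j \<longrightarrow> lost_ones n x (zs j') \<noteq> {})" for y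
    using j by (auto simp: all_lose_ones_def)
  have "g y' \<le> g y" if "y \<in> bitstrings n" "y' \<in> bitstrings n" "\<forall>i. y' i \<longrightarrow> y i" for y y'
    using selection_prob_mono[OF mono that] by (auto simp: g_def)
  moreover have "(\<lambda>y. if all_lose_ones n x K (zs(j := y))
          then selection_prob f K j (zs(j := y)) * real (card (lost_ones n x ((zs(j := y)) j))) else 0)
      = (\<lambda>y. if lost_ones n x y \<noteq> {} then real (card (lost_ones n x y)) * g y else 0)"
    by (auto simp: all_upd g_def fun_eq_iff)
  moreover have "(\<lambda>y. if all_lose_ones n x K (zs(j := y)) then selection_prob f K j (zs(j := y)) else 0)
      = (\<lambda>y. if lost_ones n x y \<noteq> {} then g y else 0)"
    by (auto simp: all_upd g_def fun_eq_iff)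
  ultimately show ?thesis
    unfolding m_def by (simp only: expectation_mutate_lost_ones_le[OF x q])
qed

lemma expectation_selected_lost_ones_le:
  assumes x: "x \<in> bitstrings n" and q: "0 \<le> c / n" "c / n \<le> 1"
    and mono: "monotone_bitfun n f" and j: "j < K"
  defines "P \<equiv> Pi_pmf {..<K} (\<lambda>_. False) (\<lambda>_. mutate n c x)"
    and "m \<equiv> card (one_bits n x)"
  shows "measure_pmf.expectation P (\<lambda>ys. if all_lose_ones n x K ys
           then selection_prob f K j ys * real (card (lost_ones n x (ys j))) else 0)
         * (1 - (1 - c / n) ^ m)
       \<le> measure_pmf.expectation P (\<lambda>ys. if all_lose_ones n x K ys then selection_prob f K j ys else 0)
         * (real m * (c / n))"
proof -
  define M where "M = mutate n c x"
  define Q where "Q = Pi_pmf ({..<K} - {j}) (\<lambda>_. False) (\<lambda>_. M)"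
  have intQ: "integrable Q F" for F :: "_ \<Rightarrow> real"
    unfolding Q_def M_def by (intro integrable_measure_pmf_finite finite_set_Pi_pmf_mutate[OF x]) simp
  have "measure_pmf.expectation P (\<lambda>ys. if all_lose_ones n x K ys
           then selection_prob f K j ys * real (card (lost_ones n x (ys j))) else 0) * (1 - (1 - c / n) ^ m)
      = measure_pmf.expectation Q (\<lambda>zs. measure_pmf.expectation M (\<lambda>y. if all_lose_ones n x K (zs(j := y))
            then selection_prob f K j (zs(j := y)) * real (card (lost_ones n x ((zs(j := y)) j))) else 0)
          * (1 - (1 - c / n) ^ m))"
    unfolding P_def M_def Q_def by (subst expectation_Pi_pmf_mutate_split[OF x j]) simp
  also have "\<dots> \<le> measure_pmf.expectation Q (\<lambda>zs. measure_pmf.expectation M (\<lambda>y. if all_lose_ones n x K (zs(j := y))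
            then selection_prob f K j (zs(j := y)) else 0) * (real m * (c / n)))"
    unfolding M_def m_def
    by (intro integral_mono intQ[unfolded M_def] expectation_mutate_selected_lost_ones_le[OF x q mono j])
  also have "\<dots> = measure_pmf.expectation P (\<lambda>ys. if all_lose_ones n x K ys then selection_prob f K j ys else 0)
         * (real m * (c / n))"
    unfolding P_def M_def Q_def by (subst expectation_Pi_pmf_mutate_split[OF x j]) simp
  finally show ?thesis .
qed

section \<open>One generation\<close>

lemma num_offspring_pos: "1 \<le> lam \<Longrightarrow> 0 < num_offspring lam"
  using round_mono[of 1 lam] by (simp add: num_offspring_def)

lemma generation_eq_bind:
  "generation n c f x lam =
     bind_pmf (Pi_pmf {..<num_offspring lam} (\<lambda>_. False) (\<lambda>_. mutate n c x))
       (\<lambda>ys. bind_pmf (pmf_of_set (winners f (num_offspring lam) ys)) (\<lambda>j. return_pmf (ys, ys j)))"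
  by (simp add: generation_def winners_def Let_def)

lemma indicator_event_notA:
  "indicator (event_notA n x lam) (ys, y) = (if all_lose_ones n x (num_offspring lam) ys then 1 else (0::real))"
  by (auto simp: event_notA_def all_lose_ones_def lost_ones_def indicator_def)

context
  fixes n :: nat and c :: real and f :: "(nat \<Rightarrow> bool) \<Rightarrow> real" and x :: "nat \<Rightarrow> bool" and lam :: real
  assumes x: "x \<in> bitstrings n" and lam: "1 \<le> lam"
begin

private abbreviation "K \<equiv> num_offspring lam"
private abbreviation "P \<equiv> Pi_pmf {..<K} (\<lambda>_. False) (\<lambda>_. mutate n c x)"

lemma finite_set_pmf_generation: "finite (set_pmf (generation n c f x lam))"
  unfolding generation_eq_bind
  using finite_set_Pi_pmf_mutate[OF x] winners_nonempty[OF num_offspring_pos[OF lam]] finite_winners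
  by (auto intro!: finite_UN_I)

lemma expectation_generation:
  "measure_pmf.expectation (generation n c f x lam) H
     = measure_pmf.expectation P (\<lambda>ys. (\<Sum>j\<in>winners f K ys. H (ys, ys j)) / real (card (winners f K ys)))"
proof -
  have W: "winners f K ys \<noteq> {}" "finite (winners f K ys)" for ys
    using winners_nonempty[OF num_offspring_pos[OF lam]] finite_winners by auto
  show ?thesis
    unfolding generation_eq_bind
    by (subst expectation_bind_pmf_finite)
       (auto intro!: Bochner_Integration.integral_cong finite_set_Pi_pmf_mutate[OF x]
             simp: W expectation_bind_pmf_finite integral_pmf_of_set)
qed

lemma event_notA_possible:
  assumes c: "0 < c" "c \<le> real n" and ones: "one_bits n x \<noteq> {}"
  shows "set_pmf (generation n c f x lam) \<inter> event_notA n x lam \<noteq> {}"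
proof -
  obtain i0 where i0: "i0 < n" "x i0" using ones by (auto simp: one_bits_def)
  have q: "0 < c / n" "c / n \<le> 1" using c i0 by auto
  \<comment> \<open>For mutation rate 1 every bit flips, so the only possible offspring is the complement.\<close>
  define y where "y = (if c / n = 1 then (\<lambda>i. i < n \<and> \<not> x i) else x(i0 := False))"
  have y: "y \<in> bitstrings n" "lost_ones n x y \<noteq> {}"
    using x i0 by (auto simp: y_def bitstrings_def lost_ones_def)
  have "pmf (mutate n c x) y = (\<Prod>i<n. if x i \<noteq> y i then c / n else 1 - c / n)"
    using q by (intro pmf_mutate[OF x y(1)]) auto
  also have "\<dots> > 0"
    using q by (intro prod_pos) (auto simp: y_def)
  finally have "y \<in> set_pmf (mutate n c x)" by (simp add: set_pmf_iff)
  define ys where "ys = (\<lambda>j. if j < K then y else (\<lambda>_. False))"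
  from \<open>y \<in> set_pmf _\<close> have "ys \<in> set_pmf P"
    unfolding ys_def
    by (subst set_Pi_pmf) (auto simp: PiE_dflt_def)
  moreover have "0 \<in> winners f K ys" and "ys 0 = y"
    using num_offspring_pos[OF lam] by (auto simp: winners_def ys_def)
  ultimately have "(ys, y) \<in> set_pmf (generation n c f x lam)"
    unfolding generation_eq_bind using winners_nonempty[OF num_offspring_pos[OF lam]] finite_winners
    by (auto simp: set_bind_pmf intro!: bexI[of _ ys] bexI[of _ 0])
  moreover have "(ys, y) \<in> event_notA n x lam"
    using y(2) by (auto simp: event_notA_def lost_ones_def ys_def)
  ultimately show ?thesis by blast
qed

lemma expectation_generation_event_notA:
  "measure_pmf.expectation (generation n c f x lam) (\<lambda>z. indicator (event_notA n x lam) z * \<phi> (snd z))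
     = (\<Sum>j<K. measure_pmf.expectation P
          (\<lambda>ys. if all_lose_ones n x K ys then selection_prob f K j ys * \<phi> (ys j) else 0))"
proof -
  have "measure_pmf.expectation (generation n c f x lam) (\<lambda>z. indicator (event_notA n x lam) z * \<phi> (snd z))
      = measure_pmf.expectation P
          (\<lambda>ys. \<Sum>j<K. if all_lose_ones n x K ys then selection_prob f K j ys * \<phi> (ys j) else 0)"
    unfolding expectation_generation indicator_event_notA
    by (intro Bochner_Integration.integral_cong refl) (simp add: sum_winners_divide_card)
  also have "\<dots> = (\<Sum>j<K. measure_pmf.expectation P
          (\<lambda>ys. if all_lose_ones n x K ys then selection_prob f K j ys * \<phi> (ys j) else 0))"
    by (intro Bochner_Integration.integral_sum integrable_measure_pmf_finite finite_set_Pi_pmf_mutate[OF x]) simp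
  finally show ?thesis .
qed

lemma expectation_lost_ones_event_notA_le:
  assumes q: "0 \<le> c / n" "c / n \<le> 1" and mono: "monotone_bitfun n f"
  defines "m \<equiv> card (one_bits n x)"
  shows "measure_pmf.expectation (generation n c f x lam)
           (\<lambda>z. indicator (event_notA n x lam) z * real (card (lost_ones n x (snd z))))
         * (1 - (1 - c / n) ^ m)
       \<le> measure_pmf.prob (generation n c f x lam) (event_notA n x lam) * (real m * (c / n))"
proof -
  have prob: "measure_pmf.prob (generation n c f x lam) (event_notA n x lam)
      = (\<Sum>j<K. measure_pmf.expectation P
          (\<lambda>ys. if all_lose_ones n x K ys then selection_prob f K j ys else 0))"
    using expectation_generation_event_notA[where \<phi>="\<lambda>_. 1", unfolded mult_1_right] by simp
  have "measure_pmf.expectation (generation n c f x lam)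
           (\<lambda>z. indicator (event_notA n x lam) z * real (card (lost_ones n x (snd z))))
         * (1 - (1 - c / n) ^ m)
      = (\<Sum>j<K. measure_pmf.expectation P (\<lambda>ys. if all_lose_ones n x K ys
           then selection_prob f K j ys * real (card (lost_ones n x (ys j))) else 0) * (1 - (1 - c / n) ^ m))"
    by (simp only: expectation_generation_event_notA[of "\<lambda>y. real (card (lost_ones n x y))"] sum_distrib_right)
  also have "\<dots> \<le> (\<Sum>j<K. measure_pmf.expectation P
          (\<lambda>ys. if all_lose_ones n x K ys then selection_prob f K j ys else 0) * (real m * (c / n)))"
    unfolding m_def by (intro sum_mono expectation_selected_lost_ones_le[OF x q mono]) simp
  also have "\<dots> = measure_pmf.prob (generation n c f x lam) (event_notA n x lam) * (real m * (c / n))"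
    by (simp only: prob sum_distrib_right)
  finally show ?thesis .
qed

lemma cond_expectation_lost_ones_le:
  assumes c: "0 < c" "c \<le> real n" and ones: "one_bits n x \<noteq> {}" and mono: "monotone_bitfun n f"
  defines "m \<equiv> card (one_bits n x)"
  shows "measure_pmf.expectation (cond_pmf (generation n c f x lam) (event_notA n x lam))
           (\<lambda>z. real (card (lost_ones n x (snd z))))
         \<le> real m * (c / n) / (1 - (1 - c / n) ^ m)"
proof -
  let ?G = "generation n c f x lam" and ?A = "event_notA n x lam"
  let ?E = "measure_pmf.expectation ?G (\<lambda>z. indicator ?A z * real (card (lost_ones n x (snd z))))"
  have q: "0 < c / n" "c / n \<le> 1" using c ones by (auto simp: one_bits_def)
  have "0 < m" using ones by (simp add: m_def one_bits_def card_gt_0_iff)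
  then have "(1 - c / n) ^ m < 1" using q by (subst power_less_one_iff) auto
  then have D: "0 < 1 - (1 - c / n) ^ m" by simp
  have ne: "set_pmf ?G \<inter> ?A \<noteq> {}" by (rule event_notA_possible[OF c ones])
  then have pr: "0 < measure_pmf.prob ?G ?A"
    by (simp add: zero_less_measure_iff measure_pmf_zero_iff)
  have "?E * (1 - (1 - c / n) ^ m) \<le> measure_pmf.prob ?G ?A * (real m * (c / n))"
    unfolding m_def using q by (intro expectation_lost_ones_event_notA_le[OF _ _ mono]) auto
  moreover have "a / p \<le> b / d" if "0 < d" "0 < p" "a * d \<le> p * b" for a b d p :: real
    using that by (simp add: field_simps)
  ultimately have "?E / measure_pmf.prob ?G ?A \<le> real m * (c / n) / (1 - (1 - c / n) ^ m)"
    using D pr by blast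
  then show ?thesis
    unfolding expectation_cond_pmf_finite[OF finite_set_pmf_generation ne] by simp
qed

end

section \<open>The bound c / (1 - exp (- c))\<close>

lemma ratio_one_minus_exp_mono:
  fixes u v :: real
  assumes u: "0 < u" and uv: "u \<le> v"
  shows "u / (1 - exp (- u)) \<le> v / (1 - exp (- v))"
proof -
  have v: "0 < v" using u uv by simp
  define t where "t = u / v"
  have t: "0 \<le> t" "t \<le> 1" using u v uv by (auto simp: t_def)
  have "exp ((1 - t) *\<^sub>R 0 + t *\<^sub>R (- v)) \<le> (1 - t) * exp 0 + t * exp (- v)"
    by (rule convex_onD[OF exp_convex t]) auto
  moreover have "(1 - t) *\<^sub>R 0 + t *\<^sub>R (- v) = - u" using v by (simp add: t_def)
  ultimately have "t * (1 - exp (- v)) \<le> 1 - exp (- u)" by (simp add: algebra_simps)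
  then have "u / (1 - exp (- u)) \<le> u / (t * (1 - exp (- v)))"
    using u t v by (intro divide_left_mono) (auto simp: t_def intro!: mult_pos_pos)
  also have "\<dots> = v / (1 - exp (- v))" using u v by (simp add: t_def field_simps)
  finally show ?thesis .
qed

text \<open>Since 1 - q \<le> exp (- q), the binomial ratio is bounded by the same expression
  with (1 - q)^m replaced by exp (- m q), which is increasing in m q \<le> c.\<close>
lemma binomial_success_ratio_le:
  fixes c :: real and m n :: nat
  assumes c: "0 < c" "c \<le> real n" and m: "1 \<le> m" "m \<le> n"
  shows "real m * (c / n) / (1 - (1 - c / n) ^ m) \<le> c / (1 - exp (- c))"
proof -
  define q where "q = c / n"
  have q: "0 < q" "q \<le> 1" using c by (auto simp: q_def)
  have "(1 - q) ^ m \<le> exp (- q) ^ m"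
    using q exp_ge_add_one_self[of "- q"] by (intro power_mono) auto
  also have "\<dots> = exp (- (real m * q))" by (simp add: exp_of_nat_mult[symmetric])
  finally have pw: "(1 - q) ^ m \<le> exp (- (real m * q))" .
  have mq: "0 < real m * q" using m q by simp
  have "real m * q \<le> real n * q" using m q by (intro mult_right_mono) auto
  then have mqc: "real m * q \<le> c" using c by (simp add: q_def)
  have "exp (- (real m * q)) < 1" using mq by simp
  then have "0 < 1 - exp (- (real m * q))" "0 < 1 - (1 - q) ^ m" using pw by linarith+
  then have "real m * q / (1 - (1 - q) ^ m) \<le> real m * q / (1 - exp (- (real m * q)))"
    using pw mq by (intro divide_left_mono) (auto intro!: mult_pos_pos)
  also have "\<dots> \<le> c / (1 - exp (- c))" by (rule ratio_one_minus_exp_mono[OF mq mqc])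
  finally show ?thesis by (simp add: q_def)
qed

lemma card_one_bits_add_zeros: "card (one_bits n x) + zeros n x = n"
proof -
  have "{..<n} = one_bits n x \<union> zero_bits n x" "one_bits n x \<inter> zero_bits n x = {}"
    by (auto simp: one_bits_def)
  then show ?thesis
    unfolding zeros_def by (metis card_Un_disjoint card_lessThan finite_Un finite_lessThan)
qed

lemma zeros_diff_ge_neg_lost_ones:
  "- real (card (lost_ones n x y)) \<le> real (zeros n x) - real (zeros n y)"
proof -
  have "zero_bits n y \<subseteq> zero_bits n x \<union> lost_ones n x y" by (auto simp: lost_ones_def)
  then have "zeros n y \<le> card (zero_bits n x \<union> lost_ones n x y)"
    unfolding zeros_def by (intro card_mono) (auto simp: lost_ones_def)
  also have "\<dots> \<le> zeros n x + card (lost_ones n x y)"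
    unfolding zeros_def by (rule card_Un_le)
  finally show ?thesis by linarith
qed

theorem mainTheorem9:
  fixes n :: nat and c s F lam :: real
    and f :: "(nat \<Rightarrow> bool) \<Rightarrow> real" and x :: "nat \<Rightarrow> bool"
  assumes "c > 0" and "s > 0" and "F > 1"
    and "c \<le> real n"
    and "monotone_bitfun n f"
    and "x \<in> bitstrings n"
    and "lam \<ge> 1"
    and "zeros n x > 0"
    and "zeros n x < n"
  shows "measure_pmf.expectation
           (cond_pmf (generation n c f x lam) (event_notA n x lam))
           (\<lambda>(ys, x'). real (zeros n x) - real (zeros n x'))
         \<ge> - c / (1 - exp (- c))
       \<and> measure_pmf.expectation
           (cond_pmf (generation n c f x lam) (event_notA n x lam))
           (\<lambda>(ys, x'). min 1 (real (zeros n x) - real (zeros n x')))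
         \<ge> - c / (1 - exp (- c))"
proof -
  let ?C = "cond_pmf (generation n c f x lam) (event_notA n x lam)"
  have m: "1 \<le> card (one_bits n x)" "card (one_bits n x) \<le> n"
    using card_one_bits_add_zeros[of n x] assms(9) by linarith+
  then have ones: "one_bits n x \<noteq> {}" by auto
  have bound: "measure_pmf.expectation ?C (\<lambda>z. real (card (lost_ones n x (snd z)))) \<le> c / (1 - exp (- c))"
    by (rule order.trans[OF cond_expectation_lost_ones_le[OF assms(6,7,1,4) ones assms(5)]
          binomial_success_ratio_le[OF assms(1,4) m]])
  have fin: "finite (set_pmf ?C)"
    using finite_set_pmf_generation[OF assms(6,7), of c f]
    by (simp add: set_cond_pmf[OF event_notA_possible[OF assms(6,7,1,4) ones]])
  have lower: "- c / (1 - exp (- c)) \<le> measure_pmf.expectation ?C H"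
    if H: "\<And>ys y. - real (card (lost_ones n x y)) \<le> H (ys, y)" for H
  proof -
    have "measure_pmf.expectation ?C (\<lambda>z. - real (card (lost_ones n x (snd z))))
        \<le> measure_pmf.expectation ?C H"
      by (intro integral_mono integrable_measure_pmf_finite[OF fin]) (metis H prod.collapse)
    then show ?thesis using bound by simp
  qed
  show ?thesis
    using zeros_diff_ge_neg_lost_ones[of n x]
    by (intro conjI lower) (auto simp: min_def)
qed

end
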